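(* For every $n\in\mathbb N$ there is an isomorphism of $\Bbbk\mathfrak S_n\otimes\Bbbk\mathbf{FA}^{\mathrm{op}}$-modules $$\hom_{\Bbbk\mathbf{FA}}(\overline P^{\otimes n},P^{\mathbf{FA}}_{\bullet})\;\cong\;\Bbbk\mathbf{FS}(\bullet,\mathbf n).$$ More precisely, the map $$\hom_{\Bbbk\mathbf{FA}}(P^{\mathbf{FA}}_{\mathbf n},P^{\mathbf{FA}}_{\mathbf t})\longrightarrow \hom_{\Bbbk\mathbf{FA}}(\overline P^{\otimes n},P^{\mathbf{FA}}_{\mathbf t})$$ given by restriction along the inclusion $\overline P^{\otimes n}\hookrightarrow P^{\mathbf{FA}}_{\mathbf n}$ is identified, via the Yoneda isomorphism $\hom_{\Bbbk\mathbf{FA}}(P^{\mathbf{FA}}_{\mathbf n},P^{\mathbf{FA}}_{\mathbf t})\cong\Bbbk\mathbf{FA}(\mathbf t,\mathbf n)$, with the surjection $\Bbbk\mathbf{FA}(\mathbf t,\mathbf n)\twoheadrightarrow\Bbbk\mathbf{FS}(\mathbf t,\mathbf n)$ that sends each surjective map to itself and each non-surjective map to $0$; this identification is natural in $\mathbf t\in\mathbf{FA}^{\mathrm{op}}$ and $\mathfrak S_n$-equivariant.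
   Context: Let $\Bbbk$ be a field. $\mathbf{FA}$ denotes the category of finite sets and all maps, and $\mathbf{FI}$, $\mathbf{FS}$, $\mathbf{FB}$ its wide subcategories of injections, surjections and bijections respectively; $\mathbf n=\{1,\dots,n\}$ for $n\in\mathbb N$ ($\mathbf 0=\emptyset$), and $\mathfrak S_n$ is the symmetric group. For a category $\mathcal C$, $\Bbbk\mathcal C(X,Y)$ is the $\Bbbk$-vector space with basis $\mathcal C(X,Y)$. A $\Bbbk\mathbf{FA}$-module is a functor from $\mathbf{FA}$ to $\Bbbk$-vector spaces (these form the abelian category $\mathcal F(\mathbf{FA})$); $\otimes$ denotes the pointwise tensor product over $\Bbbk$, and $\hom_{\Bbbk\mathbf{FA}}$ denotes natural transformations. $P^{\mathbf{FA}}_{\mathbf n}:=\Bbbk\mathbf{FA}(\mathbf n,-)$, so $P^{\mathbf{FA}}_{\mathbf n}(X)\cong\Bbbk[X]^{\otimes n}$ (where $\Bbbk[X]$ has basis $\{[x]:x\in X\}$), with the right $\mathfrak S_n$-action by precomposition, equivalently place permutation of tensor factors; write $P^{\mathbf{FA}}:=P^{\mathbf{FA}}_{\mathbf 1}$. Let $\overline{\Bbbk}$ be the functor with value $\Bbbk$ on non-empty sets (all maps acting by the identity) and $0$ on $\emptyset$, and $\Bbbk_{\mathbf 0}$ the functor with value $\Bbbk$ on $\emptyset$ and $0$ on non-empty sets. $\overline P$ is the kernel of the surjection $P^{\mathbf{FA}}\to\overline\Bbbk$, $[x]\mapsto 1$; thus $\overline P(X)=\{\sum_x a_x[x]:\sum_x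 a_x=0\}$. For $n\ge1$, $\overline P^{\otimes n}$ is the $n$-fold pointwise tensor power, a subfunctor of $P^{\mathbf{FA}}_{\mathbf n}$ stable under the place-permutation right action of $\mathfrak S_n$; by convention $\overline P^{\otimes 0}:=\overline\Bbbk$. $\Bbbk\mathbf{FS}(-,\mathbf n)$ is regarded as a $\Bbbk\mathbf{FA}^{\mathrm{op}}$-module (contravariant functor on $\mathbf{FA}$) as the quotient of $\Bbbk\mathbf{FA}(-,\mathbf n)$ by the span of non-surjective maps: for $h:Y\to X$ and a surjection $g:X\to\mathbf n$, $[g]\cdot h=[g\circ h]$ if $g\circ h$ is surjective and $0$ otherwise; $\mathfrak S_n$ acts by postcomposition. *)

theory Defs
  imports "HOL-Library.FuncSet"
begin

text \<open>We work over the skeleton of FA: objects are the sets {..<m} (m :: nat),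
  morphisms are extensional maps in {..<m} -> {..<m'} (extensional).
  An element of P_n(m) = k[{..<m}]^{\<otimes> n} = k[FA(n,m)] is a function
  (nat \<Rightarrow> nat) \<Rightarrow> 'k supported on maps n m.\<close>

definition maps :: "nat \<Rightarrow> nat \<Rightarrow> (nat \<Rightarrow> nat) set" where
  "maps a b = {..<a} \<rightarrow>\<^sub>E {..<b}"

definition surj_maps :: "nat \<Rightarrow> nat \<Rightarrow> (nat \<Rightarrow> nat) set" where
  "surj_maps a b = {f \<in> maps a b. f ` {..<a} = {..<b}}"

definition Pfree :: "nat \<Rightarrow> nat \<Rightarrow> ((nat \<Rightarrow> nat) \<Rightarrow> 'k::zero) set" where
  "Pfree n m = {v. \<forall>g. g \<notin> maps n m \<longrightarrow> v g = 0}"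

definition Pmap :: "nat \<Rightarrow> nat \<Rightarrow> (nat \<Rightarrow> nat) \<Rightarrow> ((nat \<Rightarrow> nat) \<Rightarrow> 'k::comm_monoid_add)
    \<Rightarrow> ((nat \<Rightarrow> nat) \<Rightarrow> 'k)" where
  "Pmap n m h v = (\<lambda>g'. \<Sum>g \<in> {g \<in> maps n m. restrict (h \<circ> g) {..<n} = g'}. v g)"

text \<open>Yoneda: a = sum_f a_f [f] in kFA(t,n) gives P_n \<Rightarrow> P_t, [g] \<mapsto> sum_f a_f [g o f].\<close>
definition Yon :: "nat \<Rightarrow> nat \<Rightarrow> ((nat \<Rightarrow> nat) \<Rightarrow> 'k::comm_semiring_1) \<Rightarrow> nat
    \<Rightarrow> ((nat \<Rightarrow> nat) \<Rightarrow> 'k) \<Rightarrow> ((nat \<Rightarrow> nat) \<Rightarrow> 'k)" where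
  "Yon t n a m v = (\<lambda>g'. \<Sum>g \<in> maps n m.
      \<Sum>f \<in> {f \<in> maps t n. restrict (g \<circ> f) {..<t} = g'}. a f * v g)"

definition Pbar :: "nat \<Rightarrow> (nat \<Rightarrow> 'k::comm_monoid_add) set" where
  "Pbar m = {u. (\<forall>x. x \<ge> m \<longrightarrow> u x = 0) \<and> (\<Sum>x<m. u x) = 0}"

definition tensor :: "nat \<Rightarrow> nat \<Rightarrow> (nat \<Rightarrow> nat \<Rightarrow> 'k::comm_semiring_1) \<Rightarrow> ((nat \<Rightarrow> nat) \<Rightarrow> 'k)" where
  "tensor n m u = (\<lambda>g. if g \<in> maps n m then (\<Prod>i<n. u i (g i)) else 0)"

text \<open>Pbar^{\<otimes> n}(m): span of elementary tensors of elements of Pbar(m);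
  by convention Pbar^{\<otimes> 0} = kbar, which is 0 on the empty set.\<close>
definition Pbar_pow :: "nat \<Rightarrow> nat \<Rightarrow> ((nat \<Rightarrow> nat) \<Rightarrow> 'k::comm_ring_1) set" where
  "Pbar_pow n m = (if m = 0 then {\<lambda>_. 0} else
     {v. \<exists>(N::nat) c us. (\<forall>j<N. \<forall>i<n. us j i \<in> Pbar m) \<and>
                  v = (\<lambda>g. \<Sum>j<N. c j * tensor n m (us j) g)})"

text \<open>Natural transformations Pbar^{\<otimes> n} \<Rightarrow> P_t (only values on Pbar_pow matter).\<close>
definition is_nat_trans :: "nat \<Rightarrow> nat \<Rightarrow>
    (nat \<Rightarrow> ((nat \<Rightarrow> nat) \<Rightarrow> 'k::comm_ring_1) \<Rightarrow> ((nat \<Rightarrow> nat) \<Rightarrow> 'k)) \<Rightarrow> bool" where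
  "is_nat_trans n t \<phi> \<longleftrightarrow>
     (\<forall>m. \<forall>v \<in> Pbar_pow n m. \<phi> m v \<in> Pfree t m) \<and>
     (\<forall>m v w. v \<in> Pbar_pow n m \<longrightarrow> w \<in> Pbar_pow n m \<longrightarrow>
         \<phi> m (\<lambda>g. v g + w g) = (\<lambda>g. \<phi> m v g + \<phi> m w g)) \<and>
     (\<forall>m c v. v \<in> Pbar_pow n m \<longrightarrow> \<phi> m (\<lambda>g. c * v g) = (\<lambda>g. c * \<phi> m v g)) \<and>
     (\<forall>m m' h v. h \<in> maps m m' \<longrightarrow> v \<in> Pbar_pow n m \<longrightarrow>
         \<phi> m' (Pmap n m h v) = Pmap t m h (\<phi> m v))"

definition fs_quot :: "nat \<Rightarrow> nat \<Rightarrow> ((nat \<Rightarrow> nat) \<Rightarrow> 'k::zero) \<Rightarrow> ((nat \<Rightarrow> nat) \<Rightarrow> 'k)" where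
  "fs_quot t n a = (\<lambda>f. if f \<in> surj_maps t n then a f else 0)"

end

theory Submission imports Defs begin

text \<open>The functor \<open>Pbar\<^sup>\<otimes>\<^sup>n\<close> is generated by \<open>e = \<Otimes>\<^sub>i<\<^sub>n ([i] - [n]) \<in> Pbar\<^sup>\<otimes>\<^sup>n(n+1)\<close>:
  as the coefficients of an element of \<open>Pbar\<close> sum to zero, every tensor of such elements is
  a combination of tensors \<open>\<Otimes>\<^sub>i ([p i] - [0])\<close>, which are images of \<open>e\<close>. So a natural
  transformation \<open>\<psi>\<close> into \<open>P\<^sub>t\<close> is determined by \<open>\<psi>(e) \<in> P\<^sub>t(n+1)\<close>. Collapsing a point
  \<open>i < n\<close> onto \<open>n\<close> kills \<open>e\<close>, so \<open>\<psi>(e)\<close> has coefficient \<open>0\<close> at every map \<open>t \<rightarrow> n\<close> missing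
  \<open>i\<close>. Expanding \<open>[i] - [n] = ([i] - [n+1]) - ([n] - [n+1])\<close> writes the image of \<open>e\<close> in
  \<open>Pbar\<^sup>\<otimes>\<^sup>n(n+2)\<close> through images of \<open>e\<close> under maps sending \<open>n\<close> to \<open>n+1\<close>; comparing
  coefficients shows \<open>\<psi>(e) = 0\<close> once its coefficients at the maps \<open>t \<rightarrow> n\<close> vanish. Hence \<open>\<psi>\<close>
  is determined by the coefficients of \<open>\<psi>(e)\<close> at the surjections \<open>t \<rightarrow> n\<close>, and for the
  Yoneda transformation of \<open>a\<close> these coefficients are the values of \<open>a\<close>.\<close>

lemma finite_maps [simp]: "finite (maps a b)"
  unfolding maps_def by (intro finite_PiE) auto

lemma maps_less: "c \<in> maps t n \<Longrightarrow> i < t \<Longrightarrow> c i < n"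
  using PiE_mem[of c "{..<t}" "\<lambda>_. {..<n}" i] unfolding maps_def by simp

lemma maps_undefined: "c \<in> maps t n \<Longrightarrow> \<not> i < t \<Longrightarrow> c i = undefined"
  using PiE_arb[of c "{..<t}" "\<lambda>_. {..<n}" i] unfolding maps_def by simp

lemma mapsI:
  "(\<And>i. i < t \<Longrightarrow> c i < n) \<Longrightarrow> (\<And>i. \<not> i < t \<Longrightarrow> c i = undefined) \<Longrightarrow> c \<in> maps t n"
  unfolding maps_def by (auto simp: PiE_iff extensional_def)

lemma maps_mono: "c \<in> maps t n \<Longrightarrow> n \<le> n' \<Longrightarrow> c \<in> maps t n'"
  by (intro mapsI) (auto simp: maps_undefined intro: less_le_trans maps_less)

lemma restrict_id_in_maps: "n \<le> m \<Longrightarrow> restrict id {..<n} \<in> maps n m"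
  by (intro mapsI) auto

lemma fun_upd_in_maps: "p \<in> maps n m \<Longrightarrow> x < m \<Longrightarrow> p(n := x) \<in> maps (Suc n) m"
  by (intro mapsI) (auto simp: maps_less maps_undefined less_Suc_eq)

lemma restrict_comp_in_maps:
  "h \<in> maps m m' \<Longrightarrow> g \<in> maps n m \<Longrightarrow> restrict (h \<circ> g) {..<n} \<in> maps n m'"
  unfolding maps_def by (auto simp: PiE_iff)

lemma restrict_comp_assoc:
  "f \<in> maps t n \<Longrightarrow>
   restrict (restrict (h \<circ> g) {..<n} \<circ> f) {..<t} = restrict (h \<circ> restrict (g \<circ> f) {..<t}) {..<t}"
  unfolding maps_def by (auto simp: fun_eq_iff PiE_iff)

definition comp_fibre :: "nat \<Rightarrow> nat \<Rightarrow> (nat \<Rightarrow> nat) \<Rightarrow> (nat \<Rightarrow> nat) \<Rightarrow> (nat \<Rightarrow> nat) set" where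
  "comp_fibre a b h g' = {g \<in> maps a b. restrict (h \<circ> g) {..<a} = g'}"

lemma Pmap_apply: "Pmap n m h v g' = (\<Sum>g\<in>comp_fibre n m h g'. v g)"
  unfolding Pmap_def comp_fibre_def ..

lemma Pmap_zero: "Pmap n m h (\<lambda>_. 0 :: 'k::comm_monoid_add) = (\<lambda>_. 0)"
  unfolding Pmap_def by simp

lemma Pmap_diff: "Pmap n m h (\<lambda>g. v g - w g :: 'k::comm_ring_1) = (\<lambda>g. Pmap n m h v g - Pmap n m h w g)"
  unfolding Pmap_def by (simp add: sum_subtractf)

lemma Yon_apply: "Yon t n a m v g' = (\<Sum>g\<in>maps n m. \<Sum>f\<in>comp_fibre t n g g'. a f * v g)"
  unfolding Yon_def comp_fibre_def ..

lemma comp_fibre_empty: "h \<in> maps m m' \<Longrightarrow> g' \<notin> maps n m' \<Longrightarrow> comp_fibre n m h g' = {}"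
  unfolding comp_fibre_def using restrict_comp_in_maps by blast

lemma comp_fibre_eq_PiE:
  assumes "g' \<in> maps n m'"
  shows "comp_fibre n m h g' = PiE {..<n} (\<lambda>i. {x. x < m \<and> h x = g' i})"
proof -
  have "restrict (h \<circ> g) {..<n} = g' \<longleftrightarrow> (\<forall>i<n. h (g i) = g' i)" for g
    using assms maps_undefined[OF assms] by (auto simp: fun_eq_iff)
  then show ?thesis
    unfolding comp_fibre_def maps_def by (auto simp: PiE_iff extensional_def)
qed

lemma comp_fibre_singleton:
  assumes c: "c \<in> maps t M" and h: "\<And>y j. y < M \<Longrightarrow> j < t \<Longrightarrow> h y = c j \<longleftrightarrow> y = c j"
  shows "comp_fibre t M h c = {c}"
proof -
  have "c' = c" if c': "c' \<in> maps t M" and e: "restrict (h \<circ> c') {..<t} = c" for c'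
  proof
    fix j
    show "c' j = c j"
    proof (cases "j < t")
      case True
      then have "h (c' j) = c j" using fun_cong[OF e, of j] by simp
      with h[OF maps_less[OF c' True] True] show ?thesis by simp
    qed (simp add: maps_undefined[OF c] maps_undefined[OF c'])
  qed
  moreover have "restrict (h \<circ> c) {..<t} = c"
    using h maps_less[OF c] by (auto simp: fun_eq_iff maps_undefined[OF c])
  ultimately show ?thesis
    unfolding comp_fibre_def using c by auto
qed

text \<open>Associativity of composition, as a regrouping of sums over fibres.\<close>

lemma sum_comp_fibre_comp_fibre:
  assumes g: "g \<in> maps n m"
  shows "(\<Sum>g\<^sub>0\<in>comp_fibre t m h g'. \<Sum>f\<in>comp_fibre t n g g\<^sub>0. F f)
       = (\<Sum>f\<in>comp_fibre t n (restrict (h \<circ> g) {..<n}) g'. F f)"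
proof -
  define k where "k f = restrict (g \<circ> f) {..<t}" for f
  have "(\<Sum>g\<^sub>0\<in>comp_fibre t m h g'. \<Sum>f\<in>comp_fibre t n g g\<^sub>0. F f)
      = (\<Sum>g\<^sub>0\<in>maps t m. if restrict (h \<circ> g\<^sub>0) {..<t} = g' then \<Sum>f\<in>{f \<in> maps t n. k f = g\<^sub>0}. F f else 0)"
    unfolding comp_fibre_def k_def by (rule sum.inter_filter) simp
  also have "\<dots> = (\<Sum>g\<^sub>0\<in>maps t m. \<Sum>f\<in>{f \<in> maps t n. k f = g\<^sub>0}.
                        if restrict (h \<circ> k f) {..<t} = g' then F f else 0)"
    by (rule sum.cong) auto
  also have "\<dots> = (\<Sum>f\<in>maps t n. if restrict (h \<circ> k f) {..<t} = g' then F f else 0)"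
    by (rule sum.group) (auto simp: k_def intro: restrict_comp_in_maps[OF g])
  also have "\<dots> = (\<Sum>f\<in>comp_fibre t n (restrict (h \<circ> g) {..<n}) g'. F f)"
    unfolding comp_fibre_def k_def by (auto simp: sum.inter_filter restrict_comp_assoc intro!: sum.cong)
  finally show ?thesis .
qed

lemma tensor_cong:
  "(\<And>i y. i < n \<Longrightarrow> y < m \<Longrightarrow> us i y = us' i y) \<Longrightarrow> tensor n m us = tensor n m us'"
  unfolding tensor_def by (auto intro!: ext prod.cong simp: maps_less)

lemma tensor_zero_factor: "i < n \<Longrightarrow> us i = (\<lambda>_. 0) \<Longrightarrow> tensor n m us = (\<lambda>_. 0)"
  unfolding tensor_def by (auto intro!: ext prod_zero bexI[of _ i])

lemma Pmap_tensor:
  fixes us :: "nat \<Rightarrow> nat \<Rightarrow> 'k::comm_ring_1"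
  assumes h: "h \<in> maps m m'"
  shows "Pmap n m h (tensor n m us) = tensor n m' (\<lambda>i y. \<Sum>x | x < m \<and> h x = y. us i x)"
proof
  fix g'
  show "Pmap n m h (tensor n m us) g' = tensor n m' (\<lambda>i y. \<Sum>x | x < m \<and> h x = y. us i x) g'"
  proof (cases "g' \<in> maps n m'")
    case True
    have "Pmap n m h (tensor n m us) g'
        = (\<Sum>g\<in>PiE {..<n} (\<lambda>i. {x. x < m \<and> h x = g' i}). \<Prod>i<n. us i (g i))"
      unfolding Pmap_apply comp_fibre_eq_PiE[OF True]
      by (rule sum.cong) (auto simp: tensor_def maps_def PiE_iff)
    also have "\<dots> = (\<Prod>i<n. \<Sum>x | x < m \<and> h x = g' i. us i x)"
      by (rule prod_sum_PiE[symmetric]) auto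
    finally show ?thesis using True by (simp add: tensor_def)
  qed (simp add: Pmap_apply comp_fibre_empty[OF h] tensor_def)
qed

definition unit_vec :: "nat \<Rightarrow> nat \<Rightarrow> 'k::comm_ring_1" where
  "unit_vec x y = (if y = x then 1 else 0)"

definition unit_diff :: "nat \<Rightarrow> nat \<Rightarrow> nat \<Rightarrow> 'k::comm_ring_1" where
  "unit_diff x x' y = unit_vec x y - unit_vec x' y"

lemma sum_unit_vec: "finite A \<Longrightarrow> (\<Sum>y\<in>A. unit_vec x y) = (if x \<in> A then 1 else 0)"
  by (simp add: unit_vec_def sum.delta)

lemma unit_diff_in_Pbar: "x < m \<Longrightarrow> x' < m \<Longrightarrow> unit_diff x x' \<in> Pbar m"
  unfolding Pbar_def unit_diff_def by (auto simp: sum_subtractf sum_unit_vec unit_vec_def)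

lemma unit_diff_self: "unit_diff x x = (\<lambda>_. 0)"
  by (simp add: unit_diff_def fun_eq_iff)

lemma Pmap_tensor_unit_diff:
  assumes h: "h \<in> maps m m'" and pq: "\<And>i. i < n \<Longrightarrow> p i < m \<and> q i < m"
  shows "Pmap n m h (tensor n m (\<lambda>i. unit_diff (p i) (q i)) :: (nat \<Rightarrow> nat) \<Rightarrow> 'k::comm_ring_1)
       = tensor n m' (\<lambda>i. unit_diff (h (p i)) (h (q i)))"
  unfolding Pmap_tensor[OF h]
  by (rule tensor_cong)
    (use pq in \<open>auto simp: unit_diff_def sum_subtractf sum_unit_vec unit_vec_def\<close>)

lemma tensor_diff_expand:
  fixes f f' :: "nat \<Rightarrow> nat \<Rightarrow> 'k::comm_ring_1"
  shows "tensor n m (\<lambda>i y. f i y - f' i y)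
       = (\<lambda>g. \<Sum>R\<in>Pow {..<n}. (-1) ^ (n - card R) * tensor n m (\<lambda>i. if i \<in> R then f i else f' i) g)"
proof
  fix g
  have "(\<Prod>i<n. if i \<in> R then f i (g i) else f' i (g i))
      = (\<Prod>i\<in>R. f i (g i)) * (\<Prod>i\<in>{..<n} - R. f' i (g i))" if "R \<subseteq> {..<n}" for R
    using that by (simp add: prod.If_cases Int_absorb1 Diff_eq)
  then show "tensor n m (\<lambda>i y. f i y - f' i y) g
      = (\<Sum>R\<in>Pow {..<n}. (-1) ^ (n - card R) * tensor n m (\<lambda>i. if i \<in> R then f i else f' i) g)"
    by (simp add: tensor_def prod_diff_conv_sum' if_distrib[of "\<lambda>u. u (g _)"] mult.assoc
        cong: if_cong)
qed

text \<open>Each \<open>u \<in> Pbar m\<close> equals \<open>\<Sum>\<^sub>x u x ([x] - [0])\<close>, since its coefficients sum to zero.\<close>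

lemma tensor_Pbar_expand:
  fixes us :: "nat \<Rightarrow> nat \<Rightarrow> 'k::comm_ring_1"
  assumes us: "\<And>i. i < n \<Longrightarrow> us i \<in> Pbar m"
  shows "tensor n m us
       = (\<lambda>g. \<Sum>p\<in>maps n m. (\<Prod>i<n. us i (p i)) * tensor n m (\<lambda>i. unit_diff (p i) 0) g)"
proof
  fix g
  show "tensor n m us g
      = (\<Sum>p\<in>maps n m. (\<Prod>i<n. us i (p i)) * tensor n m (\<lambda>i. unit_diff (p i) 0) g)"
  proof (cases "g \<in> maps n m")
    case True
    have coeff: "(\<Sum>x<m. us i x * unit_diff x 0 (g i)) = us i (g i)" if i: "i < n" for i
    proof -
      have "(\<Sum>x<m. us i x) = 0"
        using us[OF i] unfolding Pbar_def by simp
      moreover have "(\<Sum>x<m. us i x * unit_vec x (g i)) = us i (g i)"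
        using maps_less[OF True i] by (simp add: unit_vec_def if_distrib cong: if_cong)
      ultimately show ?thesis
        by (simp add: unit_diff_def right_diff_distrib sum_subtractf unit_vec_def)
    qed
    have "(\<Sum>p\<in>maps n m. (\<Prod>i<n. us i (p i)) * tensor n m (\<lambda>i. unit_diff (p i) 0) g)
        = (\<Sum>p\<in>PiE {..<n} (\<lambda>_. {..<m}). \<Prod>i<n. us i (p i) * unit_diff (p i) 0 (g i))"
      using True by (simp add: tensor_def prod.distrib maps_def)
    also have "\<dots> = (\<Prod>i<n. \<Sum>x<m. us i x * unit_diff x 0 (g i))"
      by (rule prod_sum_PiE[symmetric]) auto
    also have "\<dots> = tensor n m us g"
      using True by (simp add: tensor_def coeff)
    finally show ?thesis ..
  qed (simp add: tensor_def)
qed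

section \<open>Tensor powers of the augmentation ideal\<close>

lemma Pbar_pow_0: "Pbar_pow n 0 = {\<lambda>_. 0}"
  unfolding Pbar_pow_def by simp

lemma Pbar_powE:
  assumes "v \<in> Pbar_pow n m" "m \<noteq> 0"
  obtains N :: nat and us c where "\<And>j i. j < N \<Longrightarrow> i < n \<Longrightarrow> us j i \<in> Pbar m"
    and "v = (\<lambda>g. \<Sum>j<N. c j * tensor n m (us j) g)"
proof -
  have "\<exists>(N::nat) c us. (\<forall>j<N. \<forall>i<n. us j i \<in> Pbar m) \<and> v = (\<lambda>g. \<Sum>j<N. c j * tensor n m (us j) g)"
    using assms unfolding Pbar_pow_def by simp
  then show ?thesis
    using that by blast
qed

lemma zero_in_Pbar_pow: "(\<lambda>_. 0) \<in> Pbar_pow n m"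
  unfolding Pbar_pow_def by (auto intro!: exI[of _ 0])

lemma tensor_in_Pbar_pow: "0 < m \<Longrightarrow> (\<And>i. i < n \<Longrightarrow> us i \<in> Pbar m) \<Longrightarrow> tensor n m us \<in> Pbar_pow n m"
  unfolding Pbar_pow_def
  by (auto intro!: exI[of _ "1::nat"] exI[of _ "\<lambda>_. 1"] exI[of _ "\<lambda>_. us"])

lemma Pbar_pow_add:
  fixes v w :: "(nat \<Rightarrow> nat) \<Rightarrow> 'k::comm_ring_1"
  assumes v: "v \<in> Pbar_pow n m" and w: "w \<in> Pbar_pow n m"
  shows "(\<lambda>g. v g + w g) \<in> Pbar_pow n m"
proof (cases "m = 0")
  case True
  then have "v = (\<lambda>_. 0)" "w = (\<lambda>_. 0)" using v w by (simp_all add: Pbar_pow_0)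
  then show ?thesis by (simp add: zero_in_Pbar_pow)
next
  case False
  obtain N\<^sub>1 :: nat and us\<^sub>1 c\<^sub>1 where us\<^sub>1: "\<And>j i. j < N\<^sub>1 \<Longrightarrow> i < n \<Longrightarrow> us\<^sub>1 j i \<in> Pbar m"
    and v_eq: "v = (\<lambda>g. \<Sum>j<N\<^sub>1. c\<^sub>1 j * tensor n m (us\<^sub>1 j) g)"
    using Pbar_powE[OF v False] by blast
  obtain N\<^sub>2 :: nat and us\<^sub>2 c\<^sub>2 where us\<^sub>2: "\<And>j i. j < N\<^sub>2 \<Longrightarrow> i < n \<Longrightarrow> us\<^sub>2 j i \<in> Pbar m"
    and w_eq: "w = (\<lambda>g. \<Sum>j<N\<^sub>2. c\<^sub>2 j * tensor n m (us\<^sub>2 j) g)"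
    using Pbar_powE[OF w False] by blast
  define c where "c j = (if j < N\<^sub>1 then c\<^sub>1 j else c\<^sub>2 (j - N\<^sub>1))" for j
  define us where "us j = (if j < N\<^sub>1 then us\<^sub>1 j else us\<^sub>2 (j - N\<^sub>1))" for j
  have split: "(\<Sum>j<N\<^sub>1 + N. F j) = (\<Sum>j<N\<^sub>1. F j) + (\<Sum>j<N. F (N\<^sub>1 + j))" for N and F :: "nat \<Rightarrow> 'k"
    by (induction N) (simp_all add: ac_simps)
  have "(\<lambda>g. v g + w g) = (\<lambda>g. \<Sum>j<N\<^sub>1 + N\<^sub>2. c j * tensor n m (us j) g)"
    unfolding v_eq w_eq split by (simp add: c_def us_def)
  moreover have "\<forall>j<N\<^sub>1 + N\<^sub>2. \<forall>i<n. us j i \<in> Pbar m"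
    using us\<^sub>1 us\<^sub>2 by (auto simp: us_def)
  ultimately show ?thesis
    unfolding Pbar_pow_def using False by (auto intro!: exI[of _ "N\<^sub>1 + N\<^sub>2"] exI[of _ c] exI[of _ us])
qed

lemma Pbar_pow_smult:
  assumes v: "v \<in> Pbar_pow n m"
  shows "(\<lambda>g. c * v g) \<in> Pbar_pow n m"
proof (cases "m = 0")
  case True
  then have "v = (\<lambda>_. 0)" using v by (simp add: Pbar_pow_0)
  then show ?thesis by (simp add: zero_in_Pbar_pow)
next
  case False
  obtain N :: nat and us c' where us: "\<And>j i. j < N \<Longrightarrow> i < n \<Longrightarrow> us j i \<in> Pbar m"
    and v_eq: "v = (\<lambda>g. \<Sum>j<N. c' j * tensor n m (us j) g)"
    using Pbar_powE[OF v False] by blast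
  have "(\<lambda>g. c * v g) = (\<lambda>g. \<Sum>j<N. (c * c' j) * tensor n m (us j) g)"
    unfolding v_eq by (simp add: sum_distrib_left mult.assoc)
  with us False show ?thesis
    unfolding Pbar_pow_def by (auto intro!: exI[of _ N] exI[of _ "\<lambda>j. c * c' j"] exI[of _ us])
qed

lemma Pbar_pow_sum:
  "finite X \<Longrightarrow> (\<And>x. x \<in> X \<Longrightarrow> v x \<in> Pbar_pow n m) \<Longrightarrow> (\<lambda>g. \<Sum>x\<in>X. c x * v x g) \<in> Pbar_pow n m"
proof (induction X rule: finite_induct)
  case empty
  then show ?case by (simp add: zero_in_Pbar_pow)
next
  case (insert x X)
  have "(\<lambda>g. c x * v x g) \<in> Pbar_pow n m" "(\<lambda>g. \<Sum>x\<in>X. c x * v x g) \<in> Pbar_pow n m"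
    using insert by (simp_all add: Pbar_pow_smult)
  from Pbar_pow_add[OF this] show ?case
    using insert.hyps by simp
qed

section \<open>Natural transformations\<close>

context
  fixes n t :: nat and \<psi> :: "nat \<Rightarrow> ((nat \<Rightarrow> nat) \<Rightarrow> 'k::comm_ring_1) \<Rightarrow> ((nat \<Rightarrow> nat) \<Rightarrow> 'k)"
  assumes nt: "is_nat_trans n t \<psi>"
begin

lemma nat_trans_in_Pfree: "v \<in> Pbar_pow n m \<Longrightarrow> \<psi> m v \<in> Pfree t m"
  using nt unfolding is_nat_trans_def by blast

lemma nat_trans_add:
  "v \<in> Pbar_pow n m \<Longrightarrow> w \<in> Pbar_pow n m \<Longrightarrow> \<psi> m (\<lambda>g. v g + w g) = (\<lambda>g. \<psi> m v g + \<psi> m w g)"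
  using nt unfolding is_nat_trans_def by blast

lemma nat_trans_smult: "v \<in> Pbar_pow n m \<Longrightarrow> \<psi> m (\<lambda>g. c * v g) = (\<lambda>g. c * \<psi> m v g)"
  using nt unfolding is_nat_trans_def by blast

lemma nat_trans_natural:
  "h \<in> maps m m' \<Longrightarrow> v \<in> Pbar_pow n m \<Longrightarrow> \<psi> m' (Pmap n m h v) = Pmap t m h (\<psi> m v)"
  using nt unfolding is_nat_trans_def by blast

lemma nat_trans_zero: "\<psi> m (\<lambda>_. 0) = (\<lambda>_. 0)"
  using nat_trans_smult[OF zero_in_Pbar_pow, of m 0] by simp

lemma nat_trans_sum:
  "finite X \<Longrightarrow> (\<And>x. x \<in> X \<Longrightarrow> v x \<in> Pbar_pow n m) \<Longrightarrow>
   \<psi> m (\<lambda>g. \<Sum>x\<in>X. c x * v x g) = (\<lambda>g'. \<Sum>x\<in>X. c x * \<psi> m (v x) g')"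
proof (induction X rule: finite_induct)
  case empty
  then show ?case by (simp add: nat_trans_zero)
next
  case (insert x X)
  have "(\<lambda>g. c x * v x g) \<in> Pbar_pow n m" "(\<lambda>g. \<Sum>x\<in>X. c x * v x g) \<in> Pbar_pow n m"
    using insert by (simp_all add: Pbar_pow_smult Pbar_pow_sum)
  then show ?case
    using insert by (simp add: nat_trans_add nat_trans_smult)
qed

end

lemma nat_trans_diff:
  fixes \<psi>\<^sub>1 \<psi>\<^sub>2 :: "nat \<Rightarrow> ((nat \<Rightarrow> nat) \<Rightarrow> 'k::comm_ring_1) \<Rightarrow> ((nat \<Rightarrow> nat) \<Rightarrow> 'k)"
  assumes nt\<^sub>1: "is_nat_trans n t \<psi>\<^sub>1" and nt\<^sub>2: "is_nat_trans n t \<psi>\<^sub>2"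
  shows "is_nat_trans n t (\<lambda>m v g. \<psi>\<^sub>1 m v g - \<psi>\<^sub>2 m v g)"
  unfolding is_nat_trans_def
  using nat_trans_in_Pfree[OF nt\<^sub>1] nat_trans_in_Pfree[OF nt\<^sub>2]
    nat_trans_add[OF nt\<^sub>1] nat_trans_add[OF nt\<^sub>2]
    nat_trans_smult[OF nt\<^sub>1] nat_trans_smult[OF nt\<^sub>2]
    nat_trans_natural[OF nt\<^sub>1] nat_trans_natural[OF nt\<^sub>2]
  by (auto simp: Pfree_def Pmap_diff algebra_simps)

lemma Yon_in_Pfree: "Yon t n a m v \<in> Pfree t m"
  unfolding Pfree_def Yon_apply by (auto simp: comp_fibre_empty intro!: sum.neutral)

lemma Yon_add: "Yon t n a m (\<lambda>g. v g + w g) = (\<lambda>g'. Yon t n a m v g' + Yon t n a m w g')"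
  unfolding Yon_def by (simp add: distrib_left sum.distrib)

lemma Yon_smult: "Yon t n a m (\<lambda>g. c * v g) = (\<lambda>g'. c * Yon t n a m v g')"
  unfolding Yon_def by (simp add: sum_distrib_left mult.left_commute)

lemma Yon_natural:
  fixes a :: "(nat \<Rightarrow> nat) \<Rightarrow> 'k::comm_ring_1"
  assumes h: "h \<in> maps m m'"
  shows "Yon t n a m' (Pmap n m h v) = Pmap t m h (Yon t n a m v)"
proof
  fix g'
  define F where "F g f = a f * v g" for g f
  have "Yon t n a m' (Pmap n m h v) g'
      = (\<Sum>g''\<in>maps n m'. \<Sum>g\<in>comp_fibre n m h g''. \<Sum>f\<in>comp_fibre t n g'' g'. F g f)"
    unfolding Yon_apply Pmap_apply F_def
    by (simp add: sum_distrib_left sum.swap[where B = "comp_fibre n m h _"])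
  also have "\<dots> = (\<Sum>g''\<in>maps n m'. \<Sum>g\<in>comp_fibre n m h g''.
                        \<Sum>f\<in>comp_fibre t n (restrict (h \<circ> g) {..<n}) g'. F g f)"
    by (intro sum.cong refl) (auto simp: comp_fibre_def[of n m h])
  also have "\<dots> = (\<Sum>g\<in>maps n m. \<Sum>f\<in>comp_fibre t n (restrict (h \<circ> g) {..<n}) g'. F g f)"
    unfolding comp_fibre_def[of n m h] by (rule sum.group) (auto intro: restrict_comp_in_maps[OF h])
  also have "\<dots> = (\<Sum>g\<in>maps n m. \<Sum>g\<^sub>0\<in>comp_fibre t m h g'. \<Sum>f\<in>comp_fibre t n g g\<^sub>0. F g f)"
    by (simp add: sum_comp_fibre_comp_fibre)
  also have "\<dots> = Pmap t m h (Yon t n a m v) g'"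
    unfolding Yon_apply Pmap_apply F_def by (rule sum.swap)
  finally show "Yon t n a m' (Pmap n m h v) g' = Pmap t m h (Yon t n a m v) g'" .
qed

lemma is_nat_trans_Yon: "is_nat_trans n t (Yon t n (a :: (nat \<Rightarrow> nat) \<Rightarrow> 'k::comm_ring_1))"
  unfolding is_nat_trans_def by (simp add: Yon_in_Pfree Yon_add Yon_smult Yon_natural)

section \<open>The generator of \<open>Pbar\<^sup>\<otimes>\<^sup>n\<close>\<close>

definition gen_tensor :: "nat \<Rightarrow> (nat \<Rightarrow> nat) \<Rightarrow> 'k::comm_ring_1" where
  "gen_tensor n = tensor n (Suc n) (\<lambda>i. unit_diff i n)"

lemma gen_tensor_in_Pbar_pow: "gen_tensor n \<in> Pbar_pow n (Suc n)"
  unfolding gen_tensor_def by (rule tensor_in_Pbar_pow) (auto intro: unit_diff_in_Pbar)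

lemma Pmap_gen_tensor:
  "h \<in> maps (Suc n) m'
   \<Longrightarrow> Pmap n (Suc n) h (gen_tensor n) = (tensor n m' (\<lambda>i. unit_diff (h i) (h n)) :: _ \<Rightarrow> 'k::comm_ring_1)"
  unfolding gen_tensor_def by (rule Pmap_tensor_unit_diff) auto

lemma Pmap_gen_tensor_in_Pbar_pow:
  assumes h: "h \<in> maps (Suc n) m'"
  shows "Pmap n (Suc n) h (gen_tensor n) \<in> Pbar_pow n m'"
proof -
  have "0 < m'"
    using maps_less[OF h, of n] by simp
  then show ?thesis
    unfolding Pmap_gen_tensor[OF h] by (intro tensor_in_Pbar_pow unit_diff_in_Pbar) (auto intro: maps_less[OF h])
qed

lemma tensor_unit_diff_eq_Pmap_gen_tensor:
  assumes p: "p \<in> maps n m" and m: "0 < m"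
  shows "tensor n m (\<lambda>i. unit_diff (p i) 0) = (Pmap n (Suc n) (p(n := 0)) (gen_tensor n) :: _ \<Rightarrow> 'k::comm_ring_1)"
  unfolding Pmap_gen_tensor[OF fun_upd_in_maps[OF p m]] by (intro tensor_cong) simp

lemma gen_tensor_nonzero_values:
  assumes "gen_tensor n g \<noteq> (0::'k::comm_ring_1)" "i < n"
  shows "g i = i \<or> g i = n"
proof (rule ccontr)
  assume "\<not> (g i = i \<or> g i = n)"
  then have "(\<Prod>i<n. unit_diff i n (g i) :: 'k) = 0"
    using assms(2) by (intro prod_zero bexI[of _ i]) (auto simp: unit_diff_def unit_vec_def)
  with assms(1) show False
    by (simp add: gen_tensor_def tensor_def split: if_splits)
qed

text \<open>Expanding \<open>[i] - [n] = ([i] - [n+1]) - ([n] - [n+1])\<close> writes the image of the generator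
  under the inclusion \<open>n+1 \<subseteq> n+2\<close> as a signed sum of its images under these maps.\<close>

definition fold_map :: "nat \<Rightarrow> nat set \<Rightarrow> nat \<Rightarrow> nat" where
  "fold_map n R = restrict (\<lambda>x. if x = n then Suc n else if x \<in> R then x else n) {..<Suc n}"

lemma fold_map_in_maps: "fold_map n R \<in> maps (Suc n) (Suc (Suc n))"
  unfolding fold_map_def by (intro mapsI) auto

lemma Pmap_incl_gen_tensor:
  "Pmap n (Suc n) (restrict id {..<Suc n}) (gen_tensor n :: _ \<Rightarrow> 'k::comm_ring_1)
   = (\<lambda>g. \<Sum>R\<in>Pow {..<n}. (-1) ^ (n - card R) * Pmap n (Suc n) (fold_map n R) (gen_tensor n) g)"
proof -
  have incl: "restrict id {..<Suc n} \<in> maps (Suc n) (Suc (Suc n))"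
    by (rule restrict_id_in_maps) simp
  have fold: "tensor n (Suc (Suc n)) (\<lambda>i. if i \<in> R then unit_diff i (Suc n) else unit_diff n (Suc n))
      = (tensor n (Suc (Suc n)) (\<lambda>i. unit_diff (fold_map n R i) (fold_map n R n)) :: _ \<Rightarrow> 'k)" for R
    by (intro tensor_cong) (auto simp: fold_map_def)
  have "Pmap n (Suc n) (restrict id {..<Suc n}) (gen_tensor n :: _ \<Rightarrow> 'k)
      = tensor n (Suc (Suc n)) (\<lambda>i y. unit_diff i (Suc n) y - unit_diff n (Suc n) y)"
    unfolding Pmap_gen_tensor[OF incl] by (rule tensor_cong) (simp add: unit_diff_def)
  then show ?thesis
    unfolding tensor_diff_expand Pmap_gen_tensor[OF fold_map_in_maps] fold .
qed

context
  fixes n t :: nat and \<psi> :: "nat \<Rightarrow> ((nat \<Rightarrow> nat) \<Rightarrow> 'k::comm_ring_1) \<Rightarrow> ((nat \<Rightarrow> nat) \<Rightarrow> 'k)"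
  assumes nt: "is_nat_trans n t \<psi>"
begin

lemma nat_trans_tensor_eq_zero_if_gen_zero:
  assumes gen: "\<psi> (Suc n) (gen_tensor n) = (\<lambda>_. 0)" and m: "0 < m"
    and us: "\<And>i. i < n \<Longrightarrow> us i \<in> Pbar m"
  shows "\<psi> m (tensor n m us) = (\<lambda>_. 0)"
proof -
  have image_in: "tensor n m (\<lambda>i. unit_diff (p i) 0) \<in> Pbar_pow n m"
    and image_zero: "\<psi> m (tensor n m (\<lambda>i. unit_diff (p i) 0)) = (\<lambda>_. 0)"
    if p: "p \<in> maps n m" for p
    unfolding tensor_unit_diff_eq_Pmap_gen_tensor[OF p m]
    using Pmap_gen_tensor_in_Pbar_pow fun_upd_in_maps[OF p m]
    by (simp_all add: nat_trans_natural[OF nt _ gen_tensor_in_Pbar_pow] gen Pmap_zero)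
  have "\<psi> m (tensor n m us)
      = \<psi> m (\<lambda>g. \<Sum>p\<in>maps n m. (\<Prod>i<n. us i (p i)) * tensor n m (\<lambda>i. unit_diff (p i) 0) g)"
    using tensor_Pbar_expand[of n us m] us by simp
  also have "\<dots> = (\<lambda>g'. \<Sum>p\<in>maps n m. (\<Prod>i<n. us i (p i)) * \<psi> m (tensor n m (\<lambda>i. unit_diff (p i) 0)) g')"
    by (rule nat_trans_sum[OF nt, where v = "\<lambda>p. tensor n m (\<lambda>i. unit_diff (p i) 0)"])
      (simp_all add: image_in)
  finally show ?thesis
    by (simp add: image_zero cong: sum.cong)
qed

lemma nat_trans_eq_zero_if_gen_zero:
  assumes gen: "\<psi> (Suc n) (gen_tensor n) = (\<lambda>_. 0)" and v: "v \<in> Pbar_pow n m"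
  shows "\<psi> m v = (\<lambda>_. 0)"
proof (cases "m = 0")
  case True
  with v show ?thesis
    by (simp add: Pbar_pow_0 nat_trans_zero[OF nt])
next
  case False
  obtain N :: nat and us c where us: "\<And>j i. j < N \<Longrightarrow> i < n \<Longrightarrow> us j i \<in> Pbar m"
    and v_eq: "v = (\<lambda>g. \<Sum>j<N. c j * tensor n m (us j) g)"
    using Pbar_powE[OF v False] by blast
  have "\<psi> m v = (\<lambda>g'. \<Sum>j<N. c j * \<psi> m (tensor n m (us j)) g')"
    unfolding v_eq using False us by (intro nat_trans_sum[OF nt]) (auto intro: tensor_in_Pbar_pow)
  then show ?thesis
    using False us by (simp add: nat_trans_tensor_eq_zero_if_gen_zero[OF gen])
qed

lemma nat_trans_gen_vanishes_off_surj:
  assumes c: "c \<in> maps t n" and i: "i < n" "i \<notin> c ` {..<t}"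
  shows "\<psi> (Suc n) (gen_tensor n) c = 0"
proof -
  define h where "h = restrict (\<lambda>x. if x = i then n else x) {..<Suc n}"
  have h: "h \<in> maps (Suc n) (Suc n)"
    unfolding h_def by (intro mapsI) auto
  have "Pmap n (Suc n) h (gen_tensor n :: _ \<Rightarrow> 'k) = (\<lambda>_. 0)"
    unfolding Pmap_gen_tensor[OF h]
    by (rule tensor_zero_factor[OF i(1)]) (use i(1) in \<open>simp add: h_def unit_diff_self\<close>)
  then have "Pmap t (Suc n) h (\<psi> (Suc n) (gen_tensor n)) c = 0"
    by (simp add: nat_trans_natural[OF nt h gen_tensor_in_Pbar_pow, symmetric] nat_trans_zero[OF nt])
  moreover have "comp_fibre t (Suc n) h c = {c}"
    using i maps_less[OF c] by (intro comp_fibre_singleton maps_mono[OF c]) (auto simp: h_def)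
  ultimately show ?thesis
    by (simp add: Pmap_apply)
qed

lemma nat_trans_gen_zero_if_vanishes_on_maps:
  assumes z: "\<And>c. c \<in> maps t n \<Longrightarrow> \<psi> (Suc n) (gen_tensor n) c = 0"
  shows "\<psi> (Suc n) (gen_tensor n) = (\<lambda>_. 0)"
proof
  fix c
  define w where "w = \<psi> (Suc n) (gen_tensor n)"
  have incl: "restrict id {..<Suc n} \<in> maps (Suc n) (Suc (Suc n))"
    by (rule restrict_id_in_maps) simp
  have "Pmap t (Suc n) (restrict id {..<Suc n}) w
      = \<psi> (Suc (Suc n)) (Pmap n (Suc n) (restrict id {..<Suc n}) (gen_tensor n))"
    unfolding w_def by (rule nat_trans_natural[OF nt incl gen_tensor_in_Pbar_pow, symmetric])
  also have "\<dots> = (\<lambda>g'. \<Sum>R\<in>Pow {..<n}. (-1) ^ (n - card R) * Pmap t (Suc n) (fold_map n R) w g')"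
    unfolding Pmap_incl_gen_tensor w_def
    by (subst nat_trans_sum[OF nt])
      (auto simp: nat_trans_natural[OF nt fold_map_in_maps gen_tensor_in_Pbar_pow]
        intro: Pmap_gen_tensor_in_Pbar_pow fold_map_in_maps)
  finally have relation: "Pmap t (Suc n) (restrict id {..<Suc n}) w c
      = (\<Sum>R\<in>Pow {..<n}. (-1) ^ (n - card R) * Pmap t (Suc n) (fold_map n R) w c)"
    by (rule fun_cong)
  show "w c = 0"
  proof (cases "c \<in> maps t (Suc n)")
    case False
    then show ?thesis
      using nat_trans_in_Pfree[OF nt gen_tensor_in_Pbar_pow] by (simp add: w_def Pfree_def)
  next
    case True
    have "comp_fibre t (Suc n) (restrict id {..<Suc n}) c = {c}"
      by (rule comp_fibre_singleton[OF True]) auto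
    then have "Pmap t (Suc n) (restrict id {..<Suc n}) w c = w c"
      by (simp add: Pmap_apply)
    moreover have "Pmap t (Suc n) (fold_map n R) w c = 0" for R
      unfolding Pmap_apply
    proof (rule sum.neutral, rule ballI)
      fix c' assume "c' \<in> comp_fibre t (Suc n) (fold_map n R) c"
      then have c': "c' \<in> maps t (Suc n)" and c'_comp: "restrict (fold_map n R \<circ> c') {..<t} = c"
        by (auto simp: comp_fibre_def)
      have "c' j \<noteq> n" if j: "j < t" for j
      proof
        assume "c' j = n"
        then have "c j = Suc n"
          using fun_cong[OF c'_comp, of j] j by (simp add: fold_map_def)
        with maps_less[OF True j] show False by simp
      qed
      then have "c' \<in> maps t n"
        using maps_less[OF c'] maps_undefined[OF c'] by (intro mapsI) (auto simp: less_Suc_eq)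
      then show "w c' = 0"
        unfolding w_def by (rule z)
    qed
    ultimately show ?thesis
      using relation by simp
  qed
qed

lemma nat_trans_eq_zero_if_gen_vanishes_on_surj:
  assumes z: "\<And>c. c \<in> surj_maps t n \<Longrightarrow> \<psi> (Suc n) (gen_tensor n) c = 0" and v: "v \<in> Pbar_pow n m"
  shows "\<psi> m v = (\<lambda>_. 0)"
proof (rule nat_trans_eq_zero_if_gen_zero[OF nat_trans_gen_zero_if_vanishes_on_maps v])
  fix c assume c: "c \<in> maps t n"
  show "\<psi> (Suc n) (gen_tensor n) c = 0"
  proof (cases "c \<in> surj_maps t n")
    case False
    moreover have "c ` {..<t} \<subseteq> {..<n}"
      using maps_less[OF c] by auto
    ultimately obtain i where "i < n" "i \<notin> c ` {..<t}"
      using c unfolding surj_maps_def by blast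
    then show ?thesis
      by (rule nat_trans_gen_vanishes_off_surj[OF c])
  qed (rule z)
qed

end

section \<open>Restriction along \<open>Pbar\<^sup>\<otimes>\<^sup>n \<subseteq> P\<^sub>n\<close>\<close>

lemma Yon_gen_tensor_surj:
  fixes a :: "(nat \<Rightarrow> nat) \<Rightarrow> 'k::comm_ring_1"
  assumes c: "c \<in> surj_maps t n"
  shows "Yon t n a (Suc n) (gen_tensor n) c = a c"
proof -
  have c_maps: "c \<in> maps t n" and c_onto: "c ` {..<t} = {..<n}"
    using c unfolding surj_maps_def by auto
  define incl where "incl = restrict id {..<n}"
  have incl: "incl \<in> maps n (Suc n)"
    unfolding incl_def by (rule restrict_id_in_maps) simp
  have incl_only: "g = incl"
    if g: "g \<in> maps n (Suc n)" and f: "f \<in> comp_fibre t n g c" and nz: "gen_tensor n g \<noteq> (0::'k)" for g f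
  proof
    fix i
    show "g i = incl i"
    proof (cases "i < n")
      case True
      then obtain j where j: "j < t" "c j = i"
        using c_onto by (metis imageE lessThan_iff)
      have "f \<in> maps t n" "g (f j) = i"
        using f j by (auto simp: comp_fibre_def)
      with gen_tensor_nonzero_values[OF nz maps_less[of f t n j]] True j(1) show ?thesis
        by (auto simp: incl_def)
    qed (simp add: incl_def maps_undefined[OF g])
  qed
  have "gen_tensor n incl = (1::'k)"
    using incl by (simp add: gen_tensor_def tensor_def incl_def unit_diff_def unit_vec_def)
  moreover have "comp_fibre t n incl c = {c}"
    by (rule comp_fibre_singleton[OF c_maps]) (auto simp: incl_def)
  ultimately have "Yon t n a (Suc n) (gen_tensor n) c = (\<Sum>g\<in>maps n (Suc n). if g = incl then a c else 0)"
    unfolding Yon_apply by (intro sum.cong refl) (auto intro!: sum.neutral dest: incl_only)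
  also have "\<dots> = a c"
    using incl by simp
  finally show ?thesis .
qed

lemma nat_trans_eq_Yon:
  fixes \<phi> :: "nat \<Rightarrow> ((nat \<Rightarrow> nat) \<Rightarrow> 'k::comm_ring_1) \<Rightarrow> ((nat \<Rightarrow> nat) \<Rightarrow> 'k)"
  assumes nt: "is_nat_trans n t \<phi>" and v: "v \<in> Pbar_pow n m"
  shows "\<phi> m v = Yon t n (\<lambda>f. if f \<in> maps t n then \<phi> (Suc n) (gen_tensor n) f else 0) m v"
    (is "_ = Yon t n ?a m v")
proof -
  have "(\<lambda>g. \<phi> m v g - Yon t n ?a m v g) = (\<lambda>_. 0)"
  proof (rule nat_trans_eq_zero_if_gen_vanishes_on_surj[OF nat_trans_diff[OF nt is_nat_trans_Yon] _ v])
    fix c assume c: "c \<in> surj_maps t n"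
    then show "\<phi> (Suc n) (gen_tensor n) c - Yon t n ?a (Suc n) (gen_tensor n) c = 0"
      by (simp add: Yon_gen_tensor_surj surj_maps_def)
  qed
  then show ?thesis
    by (simp add: fun_eq_iff)
qed

lemma Yon_vanishes_iff_fs_quot_zero:
  fixes a :: "(nat \<Rightarrow> nat) \<Rightarrow> 'k::comm_ring_1"
  shows "(\<forall>m. \<forall>v\<in>Pbar_pow n m. Yon t n a m v = (\<lambda>_. 0)) \<longleftrightarrow> fs_quot t n a = (\<lambda>_. 0)"
proof
  assume "\<forall>m. \<forall>v\<in>Pbar_pow n m. Yon t n a m v = (\<lambda>_. 0)"
  then have "Yon t n a (Suc n) (gen_tensor n) = (\<lambda>_. 0)"
    using gen_tensor_in_Pbar_pow by blast
  then show "fs_quot t n a = (\<lambda>_. 0)"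
    by (auto simp: fs_quot_def fun_eq_iff Yon_gen_tensor_surj[symmetric])
next
  assume "fs_quot t n a = (\<lambda>_. 0)"
  then have "a c = 0" if "c \<in> surj_maps t n" for c
    using that by (auto simp: fs_quot_def fun_eq_iff split: if_splits)
  then show "\<forall>m. \<forall>v\<in>Pbar_pow n m. Yon t n a m v = (\<lambda>_. 0)"
    by (auto intro: nat_trans_eq_zero_if_gen_vanishes_on_surj[OF is_nat_trans_Yon]
        simp: Yon_gen_tensor_surj)
qed

theorem mainTheorem1:
  fixes n t :: nat
  shows "(\<forall>\<phi> :: nat \<Rightarrow> ((nat \<Rightarrow> nat) \<Rightarrow> 'k::field) \<Rightarrow> ((nat \<Rightarrow> nat) \<Rightarrow> 'k).
            is_nat_trans n t \<phi> \<longrightarrow>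
            (\<exists>a \<in> Pfree t n. \<forall>m. \<forall>v \<in> Pbar_pow n m. \<phi> m v = Yon t n a m v))
       \<and> (\<forall>a :: (nat \<Rightarrow> nat) \<Rightarrow> 'k. a \<in> Pfree t n \<longrightarrow>
            ((\<forall>m. \<forall>v \<in> Pbar_pow n m. Yon t n a m v = (\<lambda>_. 0))
             \<longleftrightarrow> fs_quot t n a = (\<lambda>_. 0)))"
proof (intro conjI allI impI)
  fix \<phi> :: "nat \<Rightarrow> ((nat \<Rightarrow> nat) \<Rightarrow> 'k) \<Rightarrow> ((nat \<Rightarrow> nat) \<Rightarrow> 'k)"
  assume "is_nat_trans n t \<phi>"
  then show "\<exists>a \<in> Pfree t n. \<forall>m. \<forall>v \<in> Pbar_pow n m. \<phi> m v = Yon t n a m v"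
    by (intro bexI[of _ "\<lambda>f. if f \<in> maps t n then \<phi> (Suc n) (gen_tensor n) f else 0"])
      (auto simp: Pfree_def intro: nat_trans_eq_Yon)
next
  fix a :: "(nat \<Rightarrow> nat) \<Rightarrow> 'k"
  show "(\<forall>m. \<forall>v \<in> Pbar_pow n m. Yon t n a m v = (\<lambda>_. 0)) \<longleftrightarrow> fs_quot t n a = (\<lambda>_. 0)"
    by (rule Yon_vanishes_iff_fs_quot_zero)
qed

end
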